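(* Let $(H;\langle\cdot,\cdot\rangle)$ be a real inner product space and let $\{e_i\}_{i\in I}$, $\{f_j\}_{j\in J}$ be two finite orthonormal families in $H$. Let $(H_{\mathbb{C}};\langle\cdot,\cdot\rangle_{\mathbb{C}})$ be the complexification of $H$. Then for any $w\in H_{\mathbb{C}}$, setting $$T(w):=\sum_{i\in I}\langle w,e_i\rangle_{\mathbb{C}}^2+\sum_{j\in J}\langle w,f_j\rangle_{\mathbb{C}}^2-2\sum_{i\in I,\,j\in J}\langle w,e_i\rangle_{\mathbb{C}}\langle w,f_j\rangle_{\mathbb{C}}\langle e_i,f_j\rangle,$$ we have $$|T(w)|\le\frac12|\langle w,\bar w\rangle_{\mathbb{C}}|+\left|T(w)-\frac12\langle w,\bar w\rangle_{\mathbb{C}}\right|\le\frac12\Big[\|w\|_{\mathbb{C}}^2+|\langle w,\bar w\rangle_{\mathbb{C}}|\Big]\le\|w\|_{\mathbb{C}}^2.$$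
   Context: The complexification $H_{\mathbb{C}}$ of a real inner product space $H$ is the set $H\times H$ of pairs $(x,y)$ (written $x+iy$) with $(x,y)+(x',y')=(x+x',y+y')$ and $(\sigma+i\tau)(x,y)=(\sigma x-\tau y,\tau x+\sigma y)$ for $\sigma,\tau\in\mathbb{R}$, and with inner product $\langle (x,y),(x',y')\rangle_{\mathbb{C}}=\langle x,x'\rangle+\langle y,y'\rangle+i[\langle x',y\rangle-\langle x,y'\rangle]$, so $\|(x,y)\|_{\mathbb{C}}^2=\|x\|^2+\|y\|^2$. The conjugate of $w=(x,y)$ is $\bar w=(x,-y)$. A vector $e\in H$ is identified with $(e,0)\in H_{\mathbb{C}}$, so $\langle w,e_i\rangle_{\mathbb{C}}=\langle w,(e_i,0)\rangle_{\mathbb{C}}$; $\langle e_i,f_j\rangle$ is the real inner product in $H$. A family $\{e_i\}$ is orthonormal if $\langle e_i,e_j\rangle=\delta_{ij}$. *)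

theory Defs
  imports "HOL-Analysis.Analysis"
begin

text \<open>Complexification of a real inner product space 'a: pairs (x,y) standing for x + i y.\<close>

definition cx_inner :: "('a::real_inner \<times> 'a) \<Rightarrow> ('a \<times> 'a) \<Rightarrow> complex" where
  "cx_inner w w' = Complex (inner (fst w) (fst w') + inner (snd w) (snd w'))
                           (inner (fst w') (snd w) - inner (fst w) (snd w'))"

definition cx_norm_sq :: "('a::real_inner \<times> 'a) \<Rightarrow> real" where
  "cx_norm_sq w = (norm (fst w))\<^sup>2 + (norm (snd w))\<^sup>2"

definition cx_conj :: "('a::real_inner \<times> 'a) \<Rightarrow> ('a \<times> 'a)" where
  "cx_conj w = (fst w, - snd w)"

definition cx_embed :: "'a::real_inner \<Rightarrow> ('a \<times> 'a)" where
  "cx_embed e = (e, 0)"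

definition orthonormal_family :: "'i set \<Rightarrow> ('i \<Rightarrow> 'a::real_inner) \<Rightarrow> bool" where
  "orthonormal_family I e \<longleftrightarrow> (\<forall>i\<in>I. \<forall>j\<in>I. inner (e i) (e j) = (if i = j then 1 else 0))"

definition T_fun :: "'i set \<Rightarrow> 'j set \<Rightarrow> ('i \<Rightarrow> 'a::real_inner) \<Rightarrow> ('j \<Rightarrow> 'a) \<Rightarrow> ('a \<times> 'a) \<Rightarrow> complex" where
  "T_fun I J e f w =
     (\<Sum>i\<in>I. (cx_inner w (cx_embed (e i)))\<^sup>2)
   + (\<Sum>j\<in>J. (cx_inner w (cx_embed (f j)))\<^sup>2)
   - 2 * (\<Sum>i\<in>I. \<Sum>j\<in>J. cx_inner w (cx_embed (e i)) * cx_inner w (cx_embed (f j))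
                              * complex_of_real (inner (e i) (f j)))"

end

theory Submission
  imports Defs
begin

text \<open>
  For \<open>w = x + i y\<close>, both \<open>T(w)\<close> and \<open>\<langle>w, conj w\<rangle>\<^sub>\<complex>\<close> are values \<open>S\<^sub>\<complex>(w, w)\<close> of the
  complex-bilinear (not sesquilinear) extensions of real symmetric forms \<open>S\<close>: of
  \<open>\<langle>D u, D v\<rangle>\<close>, where \<open>D = P - Q\<close> is the difference of the orthogonal projections onto the
  spans of the two families, and of \<open>\<langle>u, v\<rangle>\<close>. The orthogonal splitting
  \<open>P u - Q u = P (u - Q u) - (I - P) Q u\<close> gives \<open>\<parallel>D u\<parallel> \<le> \<parallel>u\<parallel>\<close>, so the form belonging to
  \<open>T(w) - \<langle>w, conj w\<rangle>\<^sub>\<complex>/2\<close> satisfies \<open>\<bar>S(u, u)\<bar> \<le> \<parallel>u\<parallel>\<^sup>2/2\<close>. For any symmetric \<open>S\<close> with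
  \<open>\<bar>S(u, u)\<bar> \<le> M \<parallel>u\<parallel>\<^sup>2\<close>, multiplying \<open>w\<close> by the unimodular phase that makes \<open>S\<^sub>\<complex>(w, w)\<close>
  real and nonnegative gives \<open>\<bar>S\<^sub>\<complex>(w, w)\<bar> = S(x', x') - S(y', y') \<le> M \<parallel>w\<parallel>\<^sup>2\<close>. The remaining
  inequalities follow from the triangle inequality and the case \<open>S = \<langle>u, v\<rangle>\<close>, \<open>M = 1\<close>.
\<close>

definition orth_proj :: "'i set \<Rightarrow> ('i \<Rightarrow> 'a::real_inner) \<Rightarrow> 'a \<Rightarrow> 'a" where
  "orth_proj I e u = (\<Sum>i\<in>I. inner u (e i) *\<^sub>R e i)"

lemma linear_orth_proj: "linear (orth_proj I e)"
  by (rule linearI)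
    (simp_all add: orth_proj_def inner_add_left scaleR_add_left sum.distrib scaleR_sum_right)

lemma inner_orth_proj_left: "inner (orth_proj I e u) v = (\<Sum>i\<in>I. inner u (e i) * inner (e i) v)"
  by (simp add: orth_proj_def inner_sum_left)

lemma inner_member_orth_proj:
  assumes "finite I" "orthonormal_family I e" "k \<in> I"
  shows "inner (e k) (orth_proj I e v) = inner (e k) v"
proof -
  have "inner (e k) (orth_proj I e v) = (\<Sum>i\<in>I. if k = i then inner v (e i) else 0)"
    unfolding orth_proj_def inner_sum_right using assms(2,3) unfolding orthonormal_family_def
    by (intro sum.cong) auto
  also have "\<dots> = inner v (e k)"
    using assms(1,3) by simp
  finally show ?thesis by (metis inner_commute)
qed

lemma inner_orth_proj_orth_proj_eq:
  assumes "finite I" "orthonormal_family I e"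
  shows "inner (orth_proj I e u) (orth_proj I e v) = inner (orth_proj I e u) v"
  unfolding inner_orth_proj_left
  using inner_member_orth_proj[OF assms] by (intro sum.cong) simp_all

lemma inner_orth_proj_orth_proj:
  assumes "finite I" "orthonormal_family I e"
  shows "inner (orth_proj I e u) (orth_proj I e v) = (\<Sum>i\<in>I. inner u (e i) * inner v (e i))"
  unfolding inner_orth_proj_orth_proj_eq[OF assms] unfolding inner_orth_proj_left
  by (intro sum.cong) (simp_all add: inner_commute)

lemma orthogonal_orth_proj_residual:
  assumes "finite I" "orthonormal_family I e"
  shows "orthogonal (orth_proj I e u) (v - orth_proj I e v)"
  using inner_orth_proj_orth_proj_eq[OF assms]
  by (simp add: orthogonal_def inner_diff_right)

lemma norm_orth_proj_Pythagorean:
  assumes "finite I" "orthonormal_family I e"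
  shows "(norm (orth_proj I e v))\<^sup>2 + (norm (v - orth_proj I e v))\<^sup>2 = (norm v)\<^sup>2"
  using norm_add_Pythagorean[OF orthogonal_orth_proj_residual[OF assms, of v v]] by simp

lemma norm_orth_proj_diff_le:
  assumes "finite I" "orthonormal_family I e" "finite J" "orthonormal_family J f"
  shows "norm (orth_proj I e u - orth_proj J f u) \<le> norm u"
proof -
  let ?P = "orth_proj I e" and ?Q = "orth_proj J f"
  define A where "A = ?P (u - ?Q u)"
  define B where "B = ?P (?Q u) - ?Q u"
  have split: "?P u - ?Q u = A + B"
    by (simp add: A_def B_def linear_diff[OF linear_orth_proj])
  have "orthogonal A B"
    using orthogonal_orth_proj_residual[OF assms(1,2), of "u - ?Q u" "?Q u"]
    by (simp add: A_def B_def orthogonal_def inner_diff_right)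
  then have "(norm (?P u - ?Q u))\<^sup>2 = (norm A)\<^sup>2 + (norm B)\<^sup>2"
    by (simp add: split norm_add_Pythagorean)
  also have "\<dots> \<le> (norm (u - ?Q u))\<^sup>2 + (norm (?Q u))\<^sup>2"
  proof (rule add_mono)
    show "(norm A)\<^sup>2 \<le> (norm (u - ?Q u))\<^sup>2"
      using norm_orth_proj_Pythagorean[OF assms(1,2), of "u - ?Q u"]
        zero_le_power2[of "norm (u - ?Q u - ?P (u - ?Q u))"]
      unfolding A_def by linarith
    have "(norm B)\<^sup>2 = (norm (?Q u - ?P (?Q u)))\<^sup>2"
      unfolding B_def by (simp only: norm_minus_commute)
    then show "(norm B)\<^sup>2 \<le> (norm (?Q u))\<^sup>2"
      using norm_orth_proj_Pythagorean[OF assms(1,2), of "?Q u"]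
        zero_le_power2[of "norm (?P (?Q u))"]
      by linarith
  qed
  also have "\<dots> = (norm u)\<^sup>2"
    using norm_orth_proj_Pythagorean[OF assms(3,4), of u] by linarith
  finally show ?thesis by (rule power2_le_imp_le) simp
qed

lemma inner_orth_proj_orth_proj_cross:
  "inner (orth_proj I e u) (orth_proj J f v)
     = (\<Sum>i\<in>I. \<Sum>j\<in>J. inner u (e i) * inner v (f j) * inner (e i) (f j))"
  unfolding orth_proj_def inner_sum_left inner_sum_right
  by (simp add: sum_distrib_left mult.assoc mult.left_commute) (rule sum.swap)

text \<open>The complex-bilinear extension of a real form \<open>S\<close>, evaluated at \<open>(x + i y, x + i y)\<close>.\<close>

definition cx_quad :: "('a \<Rightarrow> 'a \<Rightarrow> real) \<Rightarrow> 'a \<times> 'a \<Rightarrow> complex" where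
  "cx_quad S w = Complex (S (fst w) (fst w) - S (snd w) (snd w)) (2 * S (fst w) (snd w))"

lemma cx_inner_cx_conj: "cx_inner w (cx_conj w) = cx_quad inner w"
  by (simp add: cx_inner_def cx_conj_def cx_quad_def)

lemma cx_inner_cx_embed: "cx_inner w (cx_embed a) = Complex (inner (fst w) a) (inner (snd w) a)"
  by (simp add: cx_inner_def cx_embed_def inner_commute)

lemma bilinear_inner: "bilinear inner"
  by (simp add: bilinear_def linear_iff inner_add_left inner_add_right)

lemma bilinear_inner_linear_minus_inner:
  assumes "linear L"
  shows "bilinear (\<lambda>u v. inner (L u) (L v) - c * inner u v)"
  unfolding bilinear_def
proof (intro conjI allI linearI)
  fix u v w :: 'a and r :: real
  show "inner (L u) (L (v + w)) - c * inner u (v + w)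
      = (inner (L u) (L v) - c * inner u v) + (inner (L u) (L w) - c * inner u w)"
    by (simp add: linear_add[OF assms] inner_add_right distrib_left)
  show "inner (L (v + w)) (L u) - c * inner (v + w) u
      = (inner (L v) (L u) - c * inner v u) + (inner (L w) (L u) - c * inner w u)"
    by (simp add: linear_add[OF assms] inner_add_left distrib_left)
  show "inner (L u) (L (r *\<^sub>R v)) - c * inner u (r *\<^sub>R v) = r *\<^sub>R (inner (L u) (L v) - c * inner u v)"
    by (simp add: linear_scale[OF assms] right_diff_distrib mult.left_commute)
  show "inner (L (r *\<^sub>R v)) (L u) - c * inner (r *\<^sub>R v) u = r *\<^sub>R (inner (L v) (L u) - c * inner v u)"
    by (simp add: linear_scale[OF assms] right_diff_distrib mult.left_commute)
qed

lemma bilinear_symmetric_expand: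
  assumes "bilinear S" "\<And>u v. S u v = S v u"
  shows "S (a *\<^sub>R u + b *\<^sub>R v) (a *\<^sub>R u + b *\<^sub>R v) = a\<^sup>2 * S u u + 2 * a * b * S u v + b\<^sup>2 * S v v"
  using assms(2)[of v u]
  by (simp add: bilinear_ladd[OF assms(1)] bilinear_radd[OF assms(1)] bilinear_lmul[OF assms(1)]
      bilinear_rmul[OF assms(1)] power2_eq_square algebra_simps)

lemma cmod_cx_quad_le:
  fixes S :: "'a::real_inner \<Rightarrow> 'a \<Rightarrow> real"
  assumes bil: "bilinear S" and sym: "\<And>u v. S u v = S v u"
    and bound: "\<And>u. \<bar>S u u\<bar> \<le> M * inner u u"
  shows "cmod (cx_quad S w) \<le> M * cx_norm_sq w"
proof -
  obtain x y where w: "w = (x, y)" by fastforce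
  define z where "z = cx_quad S w"
  define N where "N = inner x x + inner y y"
  have N: "cx_norm_sq w = N"
    by (simp add: N_def w cx_norm_sq_def power2_norm_eq_inner)
  obtain c where c: "c\<^sup>2 = z"
    using power2_csqrt by blast
  define a b where "a = Re c" and "b = Im c"
  have ab: "a\<^sup>2 - b\<^sup>2 = Re z" "2 * a * b = Im z" "a\<^sup>2 + b\<^sup>2 = cmod z"
    using Re_power2[of c] Im_power2[of c] norm_power[of c 2]
    by (simp_all add: a_def b_def c cmod_power2 del: Re_power2 Im_power2)
  text \<open>\<open>x' + i y' = conj c * w\<close>, on which the extension of \<open>S\<close> takes the value
    \<open>conj c\<^sup>2 * z = \<bar>z\<bar>\<^sup>2\<close>.\<close>
  define x' y' where "x' = a *\<^sub>R x + b *\<^sub>R y" and "y' = a *\<^sub>R y + (- b) *\<^sub>R x"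
  have "S x' x' - S y' y' = (a\<^sup>2 - b\<^sup>2) * Re z + 2 * a * b * Im z"
    unfolding x'_def y'_def bilinear_symmetric_expand[OF bil sym] sym[of y x]
    by (simp add: z_def w cx_quad_def algebra_simps)
  also have "\<dots> = (cmod z)\<^sup>2"
    unfolding ab(1,2) cmod_power2 by (simp add: power2_eq_square)
  finally have S_rot: "S x' x' - S y' y' = (cmod z)\<^sup>2" .
  have "inner x' x' + inner y' y' = (a\<^sup>2 + b\<^sup>2) * N"
    unfolding x'_def y'_def bilinear_symmetric_expand[OF bilinear_inner inner_commute]
    by (simp add: N_def inner_commute algebra_simps)
  then have N_rot: "inner x' x' + inner y' y' = cmod z * N"
    by (simp add: ab)
  have "(cmod z)\<^sup>2 \<le> M * (inner x' x' + inner y' y')"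
    using S_rot bound[of x'] bound[of y'] by (simp add: distrib_left abs_le_iff)
  then have "cmod z * cmod z \<le> cmod z * (M * N)"
    by (simp add: N_rot power2_eq_square mult_ac)
  moreover have "0 \<le> M * N"
    using bound[of x] bound[of y] by (simp add: N_def distrib_left)
  ultimately have "cmod z \<le> M * N"
    by (cases "cmod z = 0") (simp_all add: mult_le_cancel_left_pos)
  then show ?thesis
    by (simp add: z_def N)
qed

lemma T_fun_eq_cx_quad:
  fixes e :: "'i \<Rightarrow> 'a::real_inner" and f :: "'j \<Rightarrow> 'a"
  assumes "finite I" "finite J" "orthonormal_family I e" "orthonormal_family J f"
  shows "T_fun I J e f w
    = cx_quad (\<lambda>u v. inner (orth_proj I e u - orth_proj J f u) (orth_proj I e v - orth_proj J f v)) w"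
proof -
  let ?P = "orth_proj I e" and ?Q = "orth_proj J f"
  obtain x y where w: "w = (x, y)" by fastforce
  have expand: "inner (?P u - ?Q u) (?P v - ?Q v)
      = inner (?P u) (?P v) + inner (?Q u) (?Q v) - inner (?P u) (?Q v) - inner (?P v) (?Q u)" for u v
    by (simp add: inner_diff_left inner_diff_right inner_commute)
  show ?thesis
    unfolding T_fun_def cx_quad_def w cx_inner_cx_embed expand
      inner_orth_proj_orth_proj[OF assms(1,3)] inner_orth_proj_orth_proj[OF assms(2,4)]
    unfolding inner_orth_proj_orth_proj_cross
    by (simp add: complex_eq_iff power2_eq_square sum_subtractf sum.distrib sum_distrib_left
        algebra_simps)
qed

lemma cmod_cx_inner_cx_conj_le: "cmod (cx_inner w (cx_conj w)) \<le> cx_norm_sq w"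
  using cmod_cx_quad_le[OF bilinear_inner inner_commute, of 1 w]
  by (simp add: cx_inner_cx_conj)

lemma cmod_T_fun_minus_half_le:
  fixes e :: "'i \<Rightarrow> 'a::real_inner" and f :: "'j \<Rightarrow> 'a"
  assumes "finite I" "finite J" "orthonormal_family I e" "orthonormal_family J f"
  shows "cmod (T_fun I J e f w - 1/2 * cx_inner w (cx_conj w)) \<le> 1/2 * cx_norm_sq w"
proof -
  define D where "D u = orth_proj I e u - orth_proj J f u" for u
  define S where "S u v = inner (D u) (D v) - 1/2 * inner u v" for u v
  have "linear D"
    unfolding D_def by (intro linear_compose_sub linear_orth_proj)
  then have "bilinear S"
    unfolding S_def by (rule bilinear_inner_linear_minus_inner)
  moreover have "S u v = S v u" for u v
    by (simp add: S_def inner_commute)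
  moreover have "\<bar>S u u\<bar> \<le> 1/2 * inner u u" for u
  proof -
    have "inner (D u) (D u) \<le> inner u u"
      using norm_orth_proj_diff_le[OF assms(1,3,2,4), of u]
      by (simp add: D_def power2_norm_eq_inner[symmetric] power_mono)
    then show ?thesis
      using inner_ge_zero[of "D u"] unfolding S_def abs_le_iff by linarith
  qed
  ultimately have "cmod (cx_quad S w) \<le> 1/2 * cx_norm_sq w"
    by (rule cmod_cx_quad_le)
  moreover have "T_fun I J e f w - 1/2 * cx_inner w (cx_conj w) = cx_quad S w"
    by (simp add: S_def D_def T_fun_eq_cx_quad[OF assms] cx_inner_cx_conj cx_quad_def
        complex_eq_iff diff_divide_distrib)
  ultimately show ?thesis
    by simp
qed

theorem theorem3p1:
  fixes e :: "'i \<Rightarrow> 'a::real_inner" and f :: "'j \<Rightarrow> 'a"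
    and I :: "'i set" and J :: "'j set" and w :: "'a \<times> 'a"
  assumes "finite I" and "finite J"
    and "orthonormal_family I e" and "orthonormal_family J f"
  shows "cmod (T_fun I J e f w)
           \<le> 1/2 * cmod (cx_inner w (cx_conj w)) + cmod (T_fun I J e f w - 1/2 * cx_inner w (cx_conj w))
       \<and> 1/2 * cmod (cx_inner w (cx_conj w)) + cmod (T_fun I J e f w - 1/2 * cx_inner w (cx_conj w))
           \<le> 1/2 * (cx_norm_sq w + cmod (cx_inner w (cx_conj w)))
       \<and> 1/2 * (cx_norm_sq w + cmod (cx_inner w (cx_conj w))) \<le> cx_norm_sq w"
proof -
  define T where "T = T_fun I J e f w"
  define B where "B = cx_inner w (cx_conj w)"
  have "cmod T \<le> 1/2 * cmod B + cmod (T - 1/2 * B)"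
    using norm_triangle_ineq[of "1/2 * B" "T - 1/2 * B"] by (simp add: norm_mult)
  moreover have "cmod (T - 1/2 * B) \<le> 1/2 * cx_norm_sq w"
    unfolding T_def B_def by (rule cmod_T_fun_minus_half_le[OF assms])
  moreover have "cmod B \<le> cx_norm_sq w"
    unfolding B_def by (rule cmod_cx_inner_cx_conj_le)
  ultimately show ?thesis
    unfolding T_def B_def by auto
qed

end
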